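(* For every integer $k\geq 1$ we have $$\mathrm{CD}_k \subsetneq \mathrm{CH}_k \subsetneq \mathrm{CN}_k \qquad\text{and}\qquad \mathrm{RD}_k \subsetneq \mathrm{RH}_k \subsetneq \mathrm{RN}_k .$$
   Context: Fix a finite alphabet $\Sigma$. A $k$-dimensional vector addition system with states ($k$-VASS) is a tuple $(Q,q_0,F,\delta)$ where $Q$ is a finite set of states, $q_0\in Q$ is initial, $F\subseteq Q$ is the set of accepting states, and $\delta\subseteq Q\times\Sigma\times\mathbb{Z}^k\times Q$ is a finite set of transitions (no $\varepsilon$-transitions). A run on a word $w=a_1\cdots a_n$ is a sequence of transitions $(p_{i-1},a_i,d_i,p_i)$, $i=1,\dots,n$, with $p_0=q_0$, such that the counter vectors $v_0=\vec 0$, $v_i=v_{i-1}+d_i$ all lie in $\mathbb{N}^k$. Under coverability acceptance the run is accepting if $p_n\in F$; under reachability acceptance it is accepting if $p_n\in F$ and $v_n=\vec 0$. The language of the VASS (under the chosen acceptance) is the set of words having an accepting run. A VASS is deterministic if for every state $q$ and letter $a$ there is at most one transition of the form $(q,a,d,q')$. A VASS is history-deterministic if there is a resolver, i.e. a function $r$ mapping each finite sequence of transitions and each letter $a$ to a transition labelled $a$, such that for every word $w$ in the language, the sequence of transitions obtained by successively applying $r$ (to the sequence built so far and the next letter of $w$) is a run on $w$ (all counters stay nonnegative) and is accepting. $\mathrm{CD}_k$, $\mathrm{CH}_k$, $\mathrm{CN}_k$ denote the classes of languages recognised by deterministic, history-deterministic, and arbitrary (nondeterministic) $k$-VASS respectively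 under coverability acceptance; $\mathrm{RD}_k$, $\mathrm{RH}_k$, $\mathrm{RN}_k$ denote the analogous classes under reachability acceptance. *)

theory Defs
  imports Main
begin

type_synonym 'a trans = "nat \<times> 'a \<times> int list \<times> nat"

record 'a vass =
  states :: "nat set"
  init   :: nat
  final  :: "nat set"
  delta  :: "'a trans set"

definition src :: "'a trans \<Rightarrow> nat" where "src t = fst t"
definition lbl :: "'a trans \<Rightarrow> 'a" where "lbl t = fst (snd t)"
definition upd :: "'a trans \<Rightarrow> int list" where "upd t = fst (snd (snd t))"
definition tgt :: "'a trans \<Rightarrow> nat" where "tgt t = snd (snd (snd t))"

definition is_vass :: "nat \<Rightarrow> 'a vass \<Rightarrow> bool" where
  "is_vass k A \<longleftrightarrow> finite (states A) \<and> init A \<in> states A \<and> final A \<subseteq> states A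
     \<and> finite (delta A)
     \<and> (\<forall>t\<in>delta A. src t \<in> states A \<and> tgt t \<in> states A \<and> length (upd t) = k)"

definition counter :: "'a trans list \<Rightarrow> nat \<Rightarrow> int" where
  "counter ts i = (\<Sum>t\<leftarrow>ts. upd t ! i)"

definition end_state :: "'a vass \<Rightarrow> 'a trans list \<Rightarrow> nat" where
  "end_state A ts = (if ts = [] then init A else tgt (last ts))"

definition is_run :: "nat \<Rightarrow> 'a vass \<Rightarrow> 'a list \<Rightarrow> 'a trans list \<Rightarrow> bool" where
  "is_run k A w ts \<longleftrightarrow>
     set ts \<subseteq> delta A \<and> length ts = length w
     \<and> (\<forall>i<length ts. lbl (ts ! i) = w ! i)
     \<and> (ts \<noteq> [] \<longrightarrow> src (hd ts) = init A)
     \<and> (\<forall>i. Suc i < length ts \<longrightarrow> tgt (ts ! i) = src (ts ! Suc i))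
     \<and> (\<forall>j\<le>length ts. \<forall>i<k. 0 \<le> counter (take j ts) i)"

datatype acceptance = Cov | Reach

definition accepting_run :: "acceptance \<Rightarrow> nat \<Rightarrow> 'a vass \<Rightarrow> 'a list \<Rightarrow> 'a trans list \<Rightarrow> bool" where
  "accepting_run m k A w ts \<longleftrightarrow> is_run k A w ts \<and> end_state A ts \<in> final A
     \<and> (m = Reach \<longrightarrow> (\<forall>i<k. counter ts i = 0))"

definition lang :: "acceptance \<Rightarrow> nat \<Rightarrow> 'a vass \<Rightarrow> 'a list set" where
  "lang m k A = {w. \<exists>ts. accepting_run m k A w ts}"

definition deterministic :: "'a vass \<Rightarrow> bool" where
  "deterministic A \<longleftrightarrow> (\<forall>t1\<in>delta A. \<forall>t2\<in>delta A.
      src t1 = src t2 \<and> lbl t1 = lbl t2 \<longrightarrow> t1 = t2)"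

definition resolve :: "('a trans list \<Rightarrow> 'a \<Rightarrow> 'a trans) \<Rightarrow> 'a list \<Rightarrow> 'a trans list" where
  "resolve r w = foldl (\<lambda>ts a. ts @ [r ts a]) [] w"

definition is_resolver :: "acceptance \<Rightarrow> nat \<Rightarrow> 'a vass \<Rightarrow> ('a trans list \<Rightarrow> 'a \<Rightarrow> 'a trans) \<Rightarrow> bool" where
  "is_resolver m k A r \<longleftrightarrow>
     (\<forall>ts a. r ts a \<in> delta A \<and> lbl (r ts a) = a)
     \<and> (\<forall>w\<in>lang m k A. accepting_run m k A w (resolve r w))"

definition history_deterministic :: "acceptance \<Rightarrow> nat \<Rightarrow> 'a vass \<Rightarrow> bool" where
  "history_deterministic m k A \<longleftrightarrow> (\<exists>r. is_resolver m k A r)"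

text \<open>Language classes: D (deterministic), H (history-deterministic), N (all) k-VASS,
under acceptance mode m (Cov = coverability, Reach = reachability).\<close>
definition DetClass :: "acceptance \<Rightarrow> nat \<Rightarrow> 'a list set set" where
  "DetClass m k = {lang m k A | A. is_vass k A \<and> deterministic A}"

definition HDClass :: "acceptance \<Rightarrow> nat \<Rightarrow> 'a list set set" where
  "HDClass m k = {lang m k A | A. is_vass k A \<and> history_deterministic m k A}"

definition NDClass :: "acceptance \<Rightarrow> nat \<Rightarrow> 'a list set set" where
  "NDClass m k = {lang m k A | A. is_vass k A}"

end

(* Deterministic VASS are history-deterministic: complete the automaton by a sink state and let
   the resolver follow the unique enabled transition.

   First separation: a one-counter VASS accepts a^n b^n and a^n b^M a for n <= M, but no
   a^n b^(n+p) with p > 0.  It is history-deterministic: count the a's, count the b's down while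
   the counter is positive, and only then switch to a state that ignores the counter.  A
   deterministic VASS with N states repeats a state while reading the b's of a^N b^N, so it
   reaches the same state after a^N b^(N+p) for some p > 0 and accepts that word too; under
   reachability the counters agree as well, because the accepted continuations a^N b^N a and
   a^N b^(N+p) a end with the same transition.

   Second separation: for K = k + 1, a VASS accepts a^(x_1) b ... a^(x_K) b a^z b^i iff
   z <= x_i (z = x_i under reachability), by guessing i at the first letter and storing x_i in a
   counter.  A resolver cannot guess: the configuration it reaches after a^(x_1) b ... a^(x_K) b
   must determine the whole vector (x_1, ..., x_K), but there are (N+1)^(k+1) vectors with
   entries at most N and only O(N^k) configurations with k counters reachable in O(N) steps. *)

theory Submission
  imports Defs "HOL-Library.Nat_Bijection"
begin

section \<open>Runs and configurations\<close>

lemma counter_Nil [simp]: "counter [] i = 0"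
  by (simp add: counter_def)

lemma counter_append: "counter (xs @ ys) i = counter xs i + counter ys i"
  by (simp add: counter_def)

lemma counter_snoc [simp]: "counter (xs @ [t]) i = counter xs i + upd t ! i"
  by (simp add: counter_append counter_def)

lemma end_state_Nil [simp]: "end_state A [] = init A"
  by (simp add: end_state_def)

lemma end_state_snoc [simp]: "end_state A (ts @ [t]) = tgt t"
  by (simp add: end_state_def)

lemma is_run_length: "is_run k A w ts \<Longrightarrow> length ts = length w"
  by (simp add: is_run_def)

lemma is_run_Nil_iff: "is_run k A w [] \<longleftrightarrow> w = []"
  by (auto simp: is_run_def)

lemma is_run_snoc:
  "is_run k A (w @ [x]) (ts @ [t]) \<longleftrightarrow>
     is_run k A w ts \<and> t \<in> delta A \<and> lbl t = x \<and> src t = end_state A ts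
     \<and> (\<forall>i<k. 0 \<le> counter ts i + upd t ! i)"
proof (cases "length ts = length w")
  case len: True
  have labels: "(\<forall>i<length (ts @ [t]). lbl ((ts @ [t]) ! i) = (w @ [x]) ! i)
      \<longleftrightarrow> (\<forall>i<length ts. lbl (ts ! i) = w ! i) \<and> lbl t = x"
    using len by (auto simp: nth_append less_Suc_eq)
  have chain: "((ts @ [t]) \<noteq> [] \<longrightarrow> src (hd (ts @ [t])) = init A)
      \<and> (\<forall>i. Suc i < length (ts @ [t]) \<longrightarrow> tgt ((ts @ [t]) ! i) = src ((ts @ [t]) ! Suc i))
    \<longleftrightarrow> (ts \<noteq> [] \<longrightarrow> src (hd ts) = init A)
      \<and> (\<forall>i. Suc i < length ts \<longrightarrow> tgt (ts ! i) = src (ts ! Suc i)) \<and> src t = end_state A ts"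
    by (cases ts rule: rev_cases)
       (auto simp: nth_append end_state_def less_Suc_eq hd_append split: if_splits)
  have nonneg: "(\<forall>j\<le>length (ts @ [t]). \<forall>i<k. 0 \<le> counter (take j (ts @ [t])) i)
      \<longleftrightarrow> (\<forall>j\<le>length ts. \<forall>i<k. 0 \<le> counter (take j ts) i) \<and> (\<forall>i<k. 0 \<le> counter ts i + upd t ! i)"
    by (auto simp: le_Suc_eq)
  show ?thesis
    unfolding is_run_def using labels chain nonneg len by auto
qed (auto simp: is_run_def)

lemma is_run_snocE:
  assumes "is_run k A (w @ [x]) ts'"
  obtains ts t where "ts' = ts @ [t]" "is_run k A w ts" "t \<in> delta A" "lbl t = x"
    "src t = end_state A ts" "\<forall>i<k. 0 \<le> counter ts i + upd t ! i"
proof -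
  have "ts' \<noteq> []" using is_run_length[OF assms] by auto
  then obtain ts t where "ts' = ts @ [t]" by (cases ts' rule: rev_cases) auto
  with assms that show ?thesis by (auto simp: is_run_snoc)
qed

lemma is_run_take: "is_run k A w ts \<Longrightarrow> is_run k A (take j w) (take j ts)"
  by (auto simp: is_run_def hd_take min_def dest: in_set_takeD)

lemma counter_nonneg: "is_run k A w ts \<Longrightarrow> i < k \<Longrightarrow> 0 \<le> counter ts i"
  unfolding is_run_def by (metis order_refl take_all)

lemma end_state_in_states:
  assumes "is_vass k A" "is_run k A w ts"
  shows "end_state A ts \<in> states A"
proof (cases ts rule: rev_cases)
  case (snoc ts' t)
  then have "t \<in> delta A" using assms(2) by (auto simp: is_run_def)
  with assms(1) snoc show ?thesis by (simp add: is_vass_def)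
qed (use assms(1) in \<open>simp add: is_vass_def\<close>)

lemma abs_counter_le:
  assumes "set ts \<subseteq> delta A" "\<forall>t\<in>delta A. \<bar>upd t ! i\<bar> \<le> C"
  shows "\<bar>counter ts i\<bar> \<le> C * int (length ts)"
  using assms
proof (induction ts rule: rev_induct)
  case (snoc t ts)
  then have "\<bar>upd t ! i\<bar> \<le> C" "\<bar>counter ts i\<bar> \<le> C * int (length ts)" by auto
  then show ?case by (simp add: algebra_simps)
qed simp

definition config :: "nat \<Rightarrow> 'a vass \<Rightarrow> 'a trans list \<Rightarrow> nat \<times> int list" where
  "config k A ts = (end_state A ts, map (counter ts) [0..<k])"

lemma config_eq_iff:
  "config k A ts = config k A ts' \<longleftrightarrow>
     end_state A ts = end_state A ts' \<and> (\<forall>i<k. counter ts i = counter ts' i)"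
  by (auto simp: config_def map_eq_conv)

lemma config_append_cong:
  "config k A ts = config k A ts' \<Longrightarrow> config k A (ts @ s) = config k A (ts' @ s)"
  by (cases s rule: rev_cases) (simp_all add: config_eq_iff counter_append flip: append_assoc)

lemma is_run_append_config_cong:
  assumes "is_run k A (u @ v) (ts @ s)" "length ts = length u"
    and "is_run k A u' ts'" "config k A ts' = config k A ts"
  shows "is_run k A (u' @ v) (ts' @ s)"
  using assms(1)
proof (induction v arbitrary: s rule: rev_induct)
  case Nil
  then show ?case using assms(2,3) is_run_length by fastforce
next
  case (snoc x v)
  have "length s = Suc (length v)"
    using is_run_length[OF snoc.prems] assms(2) by simp
  then obtain s' t where s: "s = s' @ [t]" by (cases s rule: rev_cases) auto
  have conf: "config k A (ts' @ s') = config k A (ts @ s')"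
    using config_append_cong[OF assms(4)] .
  from snoc.prems show ?case
    unfolding s append_assoc[symmetric] is_run_snoc
    using snoc.IH conf by (auto simp: config_eq_iff)
qed

definition update_bound :: "nat \<Rightarrow> 'a vass \<Rightarrow> nat" where
  "update_bound k A = (\<Sum>t\<in>delta A. \<Sum>i<k. nat \<bar>upd t ! i\<bar>)"

lemma abs_upd_le_update_bound:
  assumes "finite (delta A)" "t \<in> delta A" "i < k"
  shows "\<bar>upd t ! i\<bar> \<le> int (update_bound k A)"
proof -
  have "nat \<bar>upd t ! i\<bar> \<le> (\<Sum>i<k. nat \<bar>upd t ! i\<bar>)"
    using assms(3) by (intro member_le_sum) auto
  also have "\<dots> \<le> update_bound k A"
    unfolding update_bound_def using assms(1,2) by (intro member_le_sum) auto
  finally show ?thesis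
    by linarith
qed

definition bounded_configs :: "nat \<Rightarrow> 'a vass \<Rightarrow> nat \<Rightarrow> (nat \<times> int list) set" where
  "bounded_configs k A B = states A \<times> {vs. set vs \<subseteq> {0..int B} \<and> length vs = k}"

lemma finite_bounded_configs: "finite (states A) \<Longrightarrow> finite (bounded_configs k A B)"
  unfolding bounded_configs_def by (intro finite_cartesian_product finite_lists_length_eq) auto

lemma card_bounded_configs:
  assumes "finite (states A)"
  shows "card (bounded_configs k A B) = card (states A) * Suc B ^ k"
proof -
  have "nat (int B + 1) = Suc B"
    by arith
  then show ?thesis
    using assms by (simp add: bounded_configs_def card_cartesian_product card_lists_length_eq)
qed

lemma config_in_bounded_configs:
  assumes "is_vass k A" "is_run k A w ts" "length w \<le> L"
  shows "config k A ts \<in> bounded_configs k A (update_bound k A * L)"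
proof -
  have "counter ts i \<in> {0..int (update_bound k A * L)}" if "i < k" for i
  proof -
    have "\<bar>counter ts i\<bar> \<le> int (update_bound k A) * int (length ts)"
      using assms(1,2) that abs_counter_le[of ts A i] abs_upd_le_update_bound[of A _ i k]
      by (auto simp: is_vass_def is_run_def)
    also have "\<dots> \<le> int (update_bound k A * L)"
      using assms(3) is_run_length[OF assms(2)] by (simp add: mult_left_mono)
    finally show ?thesis
      using counter_nonneg[OF assms(2) that] by simp
  qed
  then show ?thesis
    using end_state_in_states[OF assms(1,2)] by (auto simp: bounded_configs_def config_def)
qed

section \<open>Resolvers\<close>

lemma resolve_Nil [simp]: "resolve r [] = []"
  by (simp add: resolve_def)

lemma resolve_snoc [simp]: "resolve r (w @ [x]) = resolve r w @ [r (resolve r w) x]"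
  by (simp add: resolve_def)

lemma length_resolve [simp]: "length (resolve r w) = length w"
  by (induction w rule: rev_induct) auto

lemma resolve_append_snoc: "resolve r (u @ v @ [x]) = resolve r (u @ v) @ [r (resolve r (u @ v)) x]"
  using resolve_snoc[of r "u @ v" x] by simp

lemma take_resolve_append: "take (length u) (resolve r (u @ v)) = resolve r u"
  by (induction v rule: rev_induct) (simp_all add: resolve_append_snoc)

lemma resolver_run_prefix:
  assumes "is_resolver m k A r" "u @ v \<in> lang m k A"
  shows "is_run k A u (resolve r u)"
proof -
  have "is_run k A (u @ v) (resolve r (u @ v))"
    using assms by (simp add: is_resolver_def accepting_run_def)
  from is_run_take[OF this, of "length u"] show ?thesis
    by (simp add: take_resolve_append)
qed

lemma resolver_config_residual:
  assumes r: "is_resolver m k A r" and uv: "u @ v \<in> lang m k A"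
    and run: "is_run k A u' (resolve r u')"
    and conf: "config k A (resolve r u') = config k A (resolve r u)"
  shows "u' @ v \<in> lang m k A"
proof -
  define s where "s = drop (length u) (resolve r (u @ v))"
  have split: "resolve r (u @ v) = resolve r u @ s"
    unfolding s_def by (metis append_take_drop_id take_resolve_append)
  have acc: "accepting_run m k A (u @ v) (resolve r u @ s)"
    using r uv unfolding is_resolver_def split[symmetric] by blast
  then have "is_run k A (u' @ v) (resolve r u' @ s)"
    by (intro is_run_append_config_cong[OF _ _ run conf]) (simp_all add: accepting_run_def)
  moreover have "config k A (resolve r u' @ s) = config k A (resolve r u @ s)"
    using config_append_cong[OF conf] .
  ultimately have "accepting_run m k A (u' @ v) (resolve r u' @ s)"
    using acc by (auto simp: accepting_run_def config_eq_iff)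
  then show ?thesis
    by (auto simp: lang_def)
qed

lemma resolve_append_end_state_cong:
  assumes positional: "\<And>ts ts' x. end_state A ts = end_state A ts' \<Longrightarrow> r ts x = r ts' x"
    and "end_state A (resolve r u) = end_state A (resolve r u')"
  shows "end_state A (resolve r (u @ v)) = end_state A (resolve r (u' @ v))"
proof (induction v rule: rev_induct)
  case (snoc x v)
  then show ?case
    by (simp add: resolve_append_snoc positional[OF snoc.IH])
qed (use assms(2) in simp)

lemma lang_Reach_subset_Cov: "lang Reach k A \<subseteq> lang Cov k A"
  by (auto simp: lang_def accepting_run_def)

section \<open>Deterministic VASS\<close>

text \<open>A resolver must return a transition for every history and letter, also when no transition
  is enabled; the completion by a sink state provides one.\<close>

definition sink :: "'a vass \<Rightarrow> nat" where
  "sink A = Suc (Max (states A))"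

definition complete :: "nat \<Rightarrow> 'a vass \<Rightarrow> 'a vass" where
  "complete k A = A\<lparr>states := insert (sink A) (states A),
     delta := delta A \<union> range (\<lambda>x. (sink A, x, replicate k 0, sink A))\<rparr>"

lemma complete_simps [simp]:
  "states (complete k A) = insert (sink A) (states A)"
  "init (complete k A) = init A" "final (complete k A) = final A"
  "delta (complete k A) = delta A \<union> range (\<lambda>x. (sink A, x, replicate k 0, sink A))"
  by (simp_all add: complete_def)

lemma end_state_complete [simp]: "end_state (complete k A) ts = end_state A ts"
  by (simp add: end_state_def)

lemma sink_notin_states: "finite (states A) \<Longrightarrow> sink A \<notin> states A"
  unfolding sink_def using Max_ge Suc_n_not_le_n by blast

lemma is_vass_complete:
  assumes "is_vass k (A :: 'a::finite vass)"
  shows "is_vass k (complete k A)"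
  using assms by (auto simp: is_vass_def src_def tgt_def upd_def)

lemma is_run_complete_iff:
  assumes "is_vass k A"
  shows "is_run k (complete k A) w ts \<longleftrightarrow> is_run k A w ts"
proof
  show "is_run k (complete k A) w ts \<Longrightarrow> is_run k A w ts"
  proof (induction w arbitrary: ts rule: rev_induct)
    case Nil
    then show ?case using is_run_length by (fastforce simp: is_run_Nil_iff)
  next
    case (snoc x w)
    from is_run_snocE[OF snoc.prems] obtain ts' t where t: "ts = ts' @ [t]"
      "is_run k (complete k A) w ts'" "t \<in> delta (complete k A)" "lbl t = x"
      "src t = end_state (complete k A) ts'" "\<forall>i<k. 0 \<le> counter ts' i + upd t ! i" .
    have run: "is_run k A w ts'" using snoc.IH t(2) .
    have "src t \<noteq> sink A"
      using t(5) end_state_in_states[OF assms run] sink_notin_states[of A] assms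
      by (auto simp: is_vass_def)
    then have "t \<in> delta A" using t(3) by (auto simp: src_def)
    then show ?case using t run by (simp add: is_run_snoc)
  qed
next
  show "is_run k A w ts \<Longrightarrow> is_run k (complete k A) w ts"
    unfolding is_run_def complete_simps by blast
qed

lemma lang_complete: "is_vass k A \<Longrightarrow> lang m k (complete k A) = lang m k A"
  by (simp add: lang_def accepting_run_def is_run_complete_iff)

definition det_resolver :: "nat \<Rightarrow> 'a vass \<Rightarrow> 'a trans list \<Rightarrow> 'a \<Rightarrow> 'a trans" where
  "det_resolver k A ts x =
     (if \<exists>t\<in>delta A. src t = end_state A ts \<and> lbl t = x
      then SOME t. t \<in> delta A \<and> src t = end_state A ts \<and> lbl t = x
      else (sink A, x, replicate k 0, sink A))"

lemma det_resolver_positional: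
  assumes "end_state A ts = end_state A ts'"
  shows "det_resolver k A ts x = det_resolver k A ts' x"
  by (simp only: det_resolver_def assms)

lemma det_resolver_in_delta:
  "det_resolver k A ts x \<in> delta (complete k A) \<and> lbl (det_resolver k A ts x) = x"
proof (cases "\<exists>t\<in>delta A. src t = end_state A ts \<and> lbl t = x")
  case True
  then have "\<exists>t. t \<in> delta A \<and> src t = end_state A ts \<and> lbl t = x" by blast
  from someI_ex[OF this] show ?thesis
    unfolding det_resolver_def if_P[OF True] by simp
next
  case False
  show ?thesis
    unfolding det_resolver_def if_not_P[OF False] by (simp add: lbl_def)
qed

lemma deterministicD:
  "deterministic A \<Longrightarrow> t \<in> delta A \<Longrightarrow> t' \<in> delta A \<Longrightarrow> src t = src t' \<Longrightarrow> lbl t = lbl t'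
    \<Longrightarrow> t = t'"
  by (simp add: deterministic_def)

lemma resolve_det_resolver:
  assumes "deterministic A"
  shows "is_run k A w \<rho> \<Longrightarrow> resolve (det_resolver k A) w = \<rho>"
proof (induction w arbitrary: \<rho> rule: rev_induct)
  case Nil
  then show ?case using is_run_length by fastforce
next
  case (snoc x w)
  from is_run_snocE[OF snoc.prems] obtain \<rho>' t where t: "\<rho> = \<rho>' @ [t]" "is_run k A w \<rho>'"
    "t \<in> delta A" "lbl t = x" "src t = end_state A \<rho>'" .
  have "(SOME t'. t' \<in> delta A \<and> src t' = end_state A \<rho>' \<and> lbl t' = x) = t"
  proof (rule some_equality)
    show "t \<in> delta A \<and> src t = end_state A \<rho>' \<and> lbl t = x" using t(3-5) by simp
    show "t' = t" if "t' \<in> delta A \<and> src t' = end_state A \<rho>' \<and> lbl t' = x" for t'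
      using deterministicD[OF assms _ t(3)] that t(4,5) by simp
  qed
  moreover have "\<exists>t'\<in>delta A. src t' = end_state A \<rho>' \<and> lbl t' = x"
    using t(3-5) by blast
  ultimately have "det_resolver k A \<rho>' x = t"
    unfolding det_resolver_def by simp
  then show ?case using snoc.IH[OF t(2)] t(1) by simp
qed

lemma det_resolver_accepting:
  assumes "deterministic A" "w \<in> lang m k A"
  shows "accepting_run m k A w (resolve (det_resolver k A) w)"
  using assms resolve_det_resolver by (fastforce simp: lang_def accepting_run_def)

lemma det_resolver_run_prefix:
  assumes "deterministic A" "u @ v \<in> lang m k A"
  shows "is_run k A u (resolve (det_resolver k A) u)"
proof -
  have "is_run k A (u @ v) (resolve (det_resolver k A) (u @ v))"
    using det_resolver_accepting[OF assms] by (simp add: accepting_run_def)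
  from is_run_take[OF this, of "length u"] show ?thesis
    by (simp add: take_resolve_append)
qed

lemma is_resolver_det_resolver:
  assumes "is_vass k A" "deterministic A"
  shows "is_resolver m k (complete k A) (det_resolver k A)"
  unfolding is_resolver_def
proof (intro conjI allI ballI)
  fix ts x
  show "det_resolver k A ts x \<in> delta (complete k A)" "lbl (det_resolver k A ts x) = x"
    using det_resolver_in_delta[of k A ts x] by auto
next
  fix w
  assume "w \<in> lang m k (complete k A)"
  then have "accepting_run m k A w (resolve (det_resolver k A) w)"
    using det_resolver_accepting[OF assms(2)] lang_complete[OF assms(1)] by simp
  then show "accepting_run m k (complete k A) w (resolve (det_resolver k A) w)"
    by (simp add: accepting_run_def is_run_complete_iff[OF assms(1)])
qed

lemma DetClass_subset_HDClass: "(DetClass m k :: 'a::finite list set set) \<subseteq> HDClass m k"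
proof
  fix L :: "'a list set"
  assume "L \<in> DetClass m k"
  then obtain A where A: "L = lang m k A" "is_vass k A" "deterministic A"
    by (auto simp: DetClass_def)
  then have "history_deterministic m k (complete k A)"
    using is_resolver_det_resolver by (auto simp: history_deterministic_def)
  then have "lang m k (complete k A) \<in> HDClass m k"
    using is_vass_complete[OF A(2)] unfolding HDClass_def by blast
  then show "L \<in> HDClass m k"
    using A(1) lang_complete[OF A(2)] by simp
qed

lemma HDClass_subset_NDClass: "HDClass m k \<subseteq> NDClass m k"
  by (auto simp: HDClass_def NDClass_def)

lemma positional_resolver_pumping:
  assumes vass: "is_vass k A"
    and positional: "\<And>ts ts' y. end_state A ts = end_state A ts' \<Longrightarrow> r ts y = r ts' y"
    and runs: "\<And>j. j \<le> card (states A) \<Longrightarrow> is_run k A (u @ replicate j x) (resolve r (u @ replicate j x))"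
  obtains p where "1 \<le> p" "p \<le> card (states A)"
    "end_state A (resolve r (u @ replicate (card (states A) + p) x))
      = end_state A (resolve r (u @ replicate (card (states A)) x))"
proof -
  define N where "N = card (states A)"
  define q where "q j = end_state A (resolve r (u @ replicate j x))" for j
  have "q ` {0..N} \<subseteq> states A"
    using end_state_in_states[OF vass runs] by (auto simp: q_def N_def)
  then have "\<not> inj_on q {0..N}"
    using card_inj_on_le[of q "{0..N}" "states A"] vass by (auto simp: N_def is_vass_def)
  then obtain i j where "i \<le> N" "j \<le> N" "i \<noteq> j" "q i = q j"
    by (auto simp: inj_on_def)
  then obtain i j where ij: "i < j" "j \<le> N" "q j = q i"
    by (metis linorder_neqE_nat)
  have "end_state A (resolve r ((u @ replicate j x) @ replicate (N - i) x))
      = end_state A (resolve r ((u @ replicate i x) @ replicate (N - i) x))"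
    using ij(3) unfolding q_def by (intro resolve_append_end_state_cong[OF positional]) simp_all
  moreover have "u @ replicate (N + (j - i)) x = (u @ replicate j x) @ replicate (N - i) x"
    "u @ replicate N x = (u @ replicate i x) @ replicate (N - i) x"
    using ij by (simp_all flip: replicate_add)
  ultimately have "q (N + (j - i)) = q N"
    unfolding q_def by argo
  with that[of "j - i"] ij show ?thesis
    by (simp add: q_def N_def)
qed

lemma deterministic_lang_neq:
  fixes a b :: 'a
  assumes vass: "is_vass k D" and det: "deterministic D"
    and L1: "\<And>n M. 1 \<le> M \<Longrightarrow> n \<le> M \<Longrightarrow> replicate n a @ replicate M b @ [a] \<in> L"
    and L2: "\<And>n. replicate n a @ replicate n b \<in> L"
    and L3: "\<And>n p. 1 \<le> p \<Longrightarrow> replicate n a @ replicate (n + p) b \<notin> L"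
  shows "lang m k D \<noteq> L"
proof
  assume L: "lang m k D = L"
  define N where "N = card (states D)"
  define R where "R = det_resolver k D"
  define u where "u j = replicate N a @ replicate j b" for j
  have N: "1 \<le> N"
    using vass card_gt_0_iff unfolding N_def is_vass_def by (metis One_nat_def Suc_leI empty_iff)
  have acc: "accepting_run m k D w (resolve R w)" if "w \<in> L" for w
    using det_resolver_accepting[OF det] that L by (simp add: R_def)
  have acc_a: "accepting_run m k D (u j @ [a]) (resolve R (u j) @ [R (resolve R (u j)) a])"
    if "N \<le> j" for j
    using acc[of "u j @ [a]"] L1[of j N] that N by (simp add: u_def resolve_append_snoc)
  obtain p where p: "1 \<le> p" "end_state D (resolve R (u (N + p))) = end_state D (resolve R (u N))"
  proof (rule positional_resolver_pumping[OF vass, of R "replicate N a" b])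
    show "R ts y = R ts' y" if "end_state D ts = end_state D ts'" for ts ts' y
      unfolding R_def using that by (rule det_resolver_positional)
    show "is_run k D (replicate N a @ replicate j b) (resolve R (replicate N a @ replicate j b))"
      if "j \<le> card (states D)" for j
    proof -
      have "(replicate N a @ replicate j b) @ replicate (N - j) b \<in> lang m k D"
        using L2[of N] L that by (simp add: N_def flip: replicate_add)
      then show ?thesis
        unfolding R_def by (rule det_resolver_run_prefix[OF det])
    qed
  qed (simp add: u_def N_def)
  have same_last: "R (resolve R (u (N + p))) a = R (resolve R (u N)) a"
    using p(2) unfolding R_def by (rule det_resolver_positional)
  have "u N \<in> L"
    using L2 by (simp add: u_def)
  \<comment> \<open>Both continuations by a end with the same transition, so under reachability the counters
    after \<open>u (N + p)\<close> and \<open>u N\<close> agree.\<close>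
  then have "accepting_run m k D (u (N + p)) (resolve R (u (N + p)))"
    using acc_a[of "N + p"] acc_a[of N] acc[of "u N"] p(2) same_last
    by (simp add: accepting_run_def is_run_snoc)
  then show False
    using L L3[OF p(1), of N] by (auto simp: lang_def u_def)
qed

section \<open>A history-deterministic language that no deterministic VASS recognises\<close>

definition zero_vec :: "nat \<Rightarrow> int list" where
  "zero_vec k = replicate k 0"

definition first_vec :: "nat \<Rightarrow> int \<Rightarrow> int list" where
  "first_vec k c = c # replicate (k - 1) 0"

lemma zero_vec_nth [simp]: "i < k \<Longrightarrow> zero_vec k ! i = 0"
  by (simp add: zero_vec_def)

lemma first_vec_nth_0 [simp]: "first_vec k c ! 0 = c"
  by (simp add: first_vec_def)

lemma first_vec_nth [simp]: "0 < i \<Longrightarrow> i < k \<Longrightarrow> first_vec k c ! i = 0"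
  by (simp add: first_vec_def nth_Cons')

lemma length_zero_vec [simp]: "length (zero_vec k) = k"
  by (simp add: zero_vec_def)

lemma length_first_vec [simp]: "0 < k \<Longrightarrow> length (first_vec k c) = k"
  by (simp add: first_vec_def)

text \<open>State 0 counts the a's, state 1 counts the b's down, state 2 reads b's without
  counting, state 3 has read the closing a, and state 4 is a rejecting sink.\<close>

definition countdown_trans :: "'a \<Rightarrow> 'a \<Rightarrow> nat \<Rightarrow> 'a trans set" where
  "countdown_trans a b k =
     {(0, a, first_vec k 1, 0), (0, b, first_vec k (-1), 1), (0, b, zero_vec k, 2),
      (1, b, first_vec k (-1), 1), (1, b, zero_vec k, 2), (2, b, zero_vec k, 2),
      (1, a, zero_vec k, 3), (2, a, zero_vec k, 3)}
     \<union> {(q, x, zero_vec k, 4) | q x. q \<le> 4}"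

definition countdown_vass :: "'a \<Rightarrow> 'a \<Rightarrow> nat \<Rightarrow> 'a vass" where
  "countdown_vass a b k =
     \<lparr>states = {..4}, init = 0, final = {0, 1, 3}, delta = countdown_trans a b k\<rparr>"

lemma countdown_vass_simps [simp]:
  "states (countdown_vass a b k) = {..4}" "init (countdown_vass a b k) = 0"
  "final (countdown_vass a b k) = {0, 1, 3}" "delta (countdown_vass a b k) = countdown_trans a b k"
  by (simp_all add: countdown_vass_def)

lemma is_vass_countdown:
  assumes "0 < k"
  shows "is_vass k (countdown_vass a b k :: 'a::finite vass)"
proof -
  have "{(q, x, zero_vec k, 4) | (q::nat) (x::'a). q \<le> 4}
      = (\<lambda>(q, x). (q, x, zero_vec k, 4::nat)) ` ({..4} \<times> UNIV)"
    by auto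
  then have "finite (countdown_trans a b k)"
    by (simp add: countdown_trans_def)
  then show ?thesis
    using assms by (auto simp: is_vass_def countdown_trans_def src_def tgt_def upd_def)
qed

definition countdown_choice :: "'a \<Rightarrow> 'a \<Rightarrow> nat \<Rightarrow> nat \<Rightarrow> int \<Rightarrow> 'a \<Rightarrow> 'a trans" where
  "countdown_choice a b k q c x =
     (if q = 0 \<and> x = a then (0, a, first_vec k 1, 0)
      else if q \<le> 1 \<and> x = b then
        (if 0 < c then (q, b, first_vec k (-1), 1) else (q, b, zero_vec k, 2))
      else if q = 2 \<and> x = b then (2, b, zero_vec k, 2)
      else if (q = 1 \<or> q = 2) \<and> x = a then (q, a, zero_vec k, 3)
      else (min q 4, x, zero_vec k, 4))"

definition countdown_resolver :: "'a \<Rightarrow> 'a \<Rightarrow> nat \<Rightarrow> 'a trans list \<Rightarrow> 'a \<Rightarrow> 'a trans" where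
  "countdown_resolver a b k ts x =
     countdown_choice a b k (end_state (countdown_vass a b k) ts) (counter ts 0) x"

lemma countdown_choice_in_trans: "countdown_choice a b k q c x \<in> countdown_trans a b k"
  by (auto simp: countdown_choice_def countdown_trans_def)

lemma lbl_countdown_choice [simp]: "lbl (countdown_choice a b k q c x) = x"
  by (simp add: countdown_choice_def lbl_def)

text \<open>Relates the state and first counter of an arbitrary run (left) to those of the resolver's
  run (right): in accepting states the resolver agrees with the run and its counter is never
  larger.\<close>

definition countdown_sim :: "nat \<Rightarrow> int \<Rightarrow> nat \<Rightarrow> int \<Rightarrow> bool" where
  "countdown_sim q c q' c' \<longleftrightarrow>
     (q \<le> 1 \<longrightarrow> q' = q \<and> c' = c) \<and> (q = 2 \<longrightarrow> (q' = 1 \<or> q' = 2) \<and> c' \<le> c)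
     \<and> (q = 3 \<longrightarrow> q' = 3 \<and> c' \<le> c)"

locale countdown =
  fixes a b :: 'a and k :: nat
  assumes letters_neq: "a \<noteq> b" and dim_pos: "0 < k"
begin

abbreviation V :: "'a vass" where "V \<equiv> countdown_vass a b k"
abbreviation R :: "'a trans list \<Rightarrow> 'a \<Rightarrow> 'a trans" where "R \<equiv> countdown_resolver a b k"

lemma counter_other:
  assumes "set ts \<subseteq> delta V" "0 < i" "i < k"
  shows "counter ts i = 0"
proof -
  have "upd t ! i = 0" if "t \<in> delta V" for t
    using that assms(2,3) by (auto simp: countdown_trans_def upd_def)
  with assms(1) show ?thesis
    by (induction ts rule: rev_induct) auto
qed

lemma end_state_le_4: "set ts \<subseteq> delta V \<Longrightarrow> end_state V ts \<le> 4"
  by (cases ts rule: rev_cases) (auto simp: countdown_trans_def tgt_def)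

lemma resolve_run: "is_run k V w (resolve R w)"
proof (induction w rule: rev_induct)
  case (snoc x w)
  define t where "t = R (resolve R w) x"
  have t_eq: "t = countdown_choice a b k (end_state V (resolve R w)) (counter (resolve R w) 0) x"
    by (simp add: t_def countdown_resolver_def)
  have set: "set (resolve R w) \<subseteq> delta V"
    using snoc by (simp add: is_run_def)
  have t: "t \<in> delta V" "lbl t = x"
    by (simp_all add: t_eq countdown_choice_in_trans)
  have src: "src t = end_state V (resolve R w)"
    using end_state_le_4[OF set] by (simp add: t_eq countdown_choice_def src_def)
  have "0 \<le> counter (resolve R w) i + upd t ! i" if "i < k" for i
  proof (cases "i = 0")
    case True
    then show ?thesis
      using counter_nonneg[OF snoc dim_pos] dim_pos
      by (auto simp: t_eq countdown_choice_def upd_def)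
  next
    case False
    then show ?thesis
      using counter_other[of "resolve R w @ [t]" i] set t(1) that by simp
  qed
  then show ?case
    using snoc t src by (simp add: is_run_snoc t_def)
qed (simp add: is_run_def)

lemma sim_step:
  assumes "countdown_sim q c q' c'" "0 \<le> c'"
    and "t \<in> delta V" "src t = q" "0 \<le> c + upd t ! 0"
  defines "t' \<equiv> countdown_choice a b k q' c' (lbl t)"
  shows "countdown_sim (tgt t) (c + upd t ! 0) (tgt t') (c' + upd t' ! 0)"
  using assms(3) unfolding countdown_vass_simps countdown_trans_def
  by (elim UnE insertE CollectE exE conjE emptyE)
    (use assms(1,2,4,5) letters_neq dim_pos in \<open>auto simp: t'_def countdown_sim_def
      countdown_choice_def src_def tgt_def upd_def lbl_def\<close>)

lemma resolver_sim:
  "is_run k V w \<rho> \<Longrightarrow>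
     countdown_sim (end_state V \<rho>) (counter \<rho> 0) (end_state V (resolve R w)) (counter (resolve R w) 0)"
proof (induction w arbitrary: \<rho> rule: rev_induct)
  case Nil
  then show ?case
    using is_run_length by (fastforce simp: countdown_sim_def)
next
  case (snoc x w)
  from is_run_snocE[OF snoc.prems] obtain \<rho>' t where t: "\<rho> = \<rho>' @ [t]" "is_run k V w \<rho>'"
    "t \<in> delta V" "lbl t = x" "src t = end_state V \<rho>'" "\<forall>i<k. 0 \<le> counter \<rho>' i + upd t ! i" .
  have "R (resolve R w) x
      = countdown_choice a b k (end_state V (resolve R w)) (counter (resolve R w) 0) x"
    by (simp add: countdown_resolver_def)
  moreover have "0 \<le> counter (resolve R w) 0"
    using counter_nonneg[OF resolve_run dim_pos] .
  ultimately show ?case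
    using sim_step[OF snoc.IH[OF t(2)], where t = t] t dim_pos by simp
qed

lemma is_resolver: "is_resolver m k V R"
  unfolding is_resolver_def
proof (intro conjI allI ballI)
  fix ts x
  show "R ts x \<in> delta V" "lbl (R ts x) = x"
    by (simp_all add: countdown_resolver_def countdown_choice_in_trans)
next
  fix w
  assume "w \<in> lang m k V"
  then obtain \<rho> where acc: "accepting_run m k V w \<rho>"
    by (auto simp: lang_def)
  then have sim: "countdown_sim (end_state V \<rho>) (counter \<rho> 0)
      (end_state V (resolve R w)) (counter (resolve R w) 0)"
    using resolver_sim by (simp add: accepting_run_def)
  have "end_state V \<rho> \<in> {0, 1, 3}"
    using acc by (simp add: accepting_run_def)
  then have state: "end_state V (resolve R w) = end_state V \<rho>"
    and le: "counter (resolve R w) 0 \<le> counter \<rho> 0"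
    using sim by (auto simp: countdown_sim_def)
  have "counter (resolve R w) i = 0" if "m = Reach" "i < k" for i
  proof (cases "i = 0")
    case True
    then show ?thesis
      using le counter_nonneg[OF resolve_run[of w] dim_pos] acc that
      by (simp add: accepting_run_def)
  next
    case False
    then show ?thesis
      using counter_other[of "resolve R w" i] resolve_run[of w] that by (simp add: is_run_def)
  qed
  then show "accepting_run m k V w (resolve R w)"
    using acc state resolve_run by (simp add: accepting_run_def)
qed

lemma resolve_as:
  "end_state V (resolve R (replicate n a)) = 0 \<and> counter (resolve R (replicate n a)) 0 = int n"
  by (induction n)
    (simp_all add: replicate_append_same[symmetric] countdown_resolver_def countdown_choice_def
      upd_def tgt_def)

lemma resolve_as_bs:
  "end_state V (resolve R (replicate n a @ replicate j b)) = (if j = 0 then 0 else if j \<le> n then 1 else 2)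
   \<and> counter (resolve R (replicate n a @ replicate j b)) 0 = (if j \<le> n then int n - int j else 0)"
proof (induction j)
  case 0
  then show ?case
    using resolve_as by simp
next
  case (Suc j)
  then show ?case
    using letters_neq dim_pos
    by (auto simp: replicate_append_same[symmetric] resolve_append_snoc countdown_resolver_def
        countdown_choice_def upd_def tgt_def)
qed

lemma resolve_as_bs_a:
  assumes "1 \<le> M"
  shows "end_state V (resolve R (replicate n a @ replicate M b @ [a])) = 3
   \<and> counter (resolve R (replicate n a @ replicate M b @ [a])) 0 = (if M \<le> n then int n - int M else 0)"
  using resolve_as_bs[of n M] assms letters_neq dim_pos
  by (auto simp: resolve_append_snoc countdown_resolver_def countdown_choice_def upd_def tgt_def)

lemma resolver_accepts:
  assumes "end_state V (resolve R w) \<in> {0, 1, 3}" "counter (resolve R w) 0 = 0"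
  shows "w \<in> lang m k V"
proof -
  have "counter (resolve R w) i = 0" if "i < k" for i
    using assms(2) counter_other[of "resolve R w" i] resolve_run[of w] that
    by (cases "i = 0") (simp_all add: is_run_def)
  then have "accepting_run m k V w (resolve R w)"
    using assms(1) resolve_run by (simp add: accepting_run_def)
  then show ?thesis
    by (auto simp: lang_def)
qed

lemma as_bs_a_in_lang: "1 \<le> M \<Longrightarrow> n \<le> M \<Longrightarrow> replicate n a @ replicate M b @ [a] \<in> lang m k V"
  using resolve_as_bs_a[of M n] by (intro resolver_accepts) auto

lemma as_bs_in_lang: "replicate n a @ replicate n b \<in> lang m k V"
  using resolve_as_bs[of n n] by (intro resolver_accepts) auto

lemma as_more_bs_notin_lang:
  assumes "1 \<le> p"
  shows "replicate n a @ replicate (n + p) b \<notin> lang m k V"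
proof
  assume "replicate n a @ replicate (n + p) b \<in> lang m k V"
  then have "end_state V (resolve R (replicate n a @ replicate (n + p) b)) \<in> {0, 1, 3}"
    using is_resolver by (simp add: is_resolver_def accepting_run_def)
  then show False
    using resolve_as_bs[of n "n + p"] assms by simp
qed

end

lemma countdown_lang_in_HDClass:
  assumes "(a :: 'a::finite) \<noteq> b" "0 < k"
  shows "lang m k (countdown_vass a b k) \<in> HDClass m k"
proof -
  interpret countdown a b k
    using assms by unfold_locales
  show ?thesis
    using is_vass_countdown[OF assms(2)] is_resolver
    unfolding HDClass_def history_deterministic_def by blast
qed

lemma countdown_lang_notin_DetClass:
  assumes "(a :: 'a::finite) \<noteq> b" "0 < k"
  shows "lang m k (countdown_vass a b k) \<notin> DetClass m k"
proof
  interpret countdown a b k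
    using assms by unfold_locales
  assume "lang m k V \<in> DetClass m k"
  then obtain D :: "'a vass" where "is_vass k D" "deterministic D" "lang m k D = lang m k V"
    by (auto simp: DetClass_def)
  then show False
    using deterministic_lang_neq[where L = "lang m k V"] as_bs_a_in_lang as_bs_in_lang
      as_more_bs_notin_lang by blast
qed

section \<open>A language that no history-deterministic VASS recognises\<close>

lemma count_list_replicate: "count_list (replicate n x) y = (if x = y then n else 0)"
  by (induction n) auto

lemma mult_pow_less_Suc_pow:
  fixes Q c N k :: nat
  assumes "N = Q * c ^ k"
  shows "Q * (c * (N + 1)) ^ k < (N + 1) ^ Suc k"
proof -
  have "Q * (c * (N + 1)) ^ k = (Q * c ^ k) * (N + 1) ^ k"
    by (simp only: power_mult_distrib mult.assoc)
  also have "\<dots> = N * (N + 1) ^ k"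
    by (simp only: assms)
  finally show ?thesis
    by simp
qed

text \<open>Branch \<open>i\<close>, for \<open>1 \<le> i \<le> K\<close>, of the automaton guesses that the word ends with \<open>i\<close> letters b
  after the \<open>K\<close>-th b, adds up the a's of the \<open>i\<close>-th block and subtracts the a's after the
  \<open>K\<close>-th b.\<close>

locale blocks =
  fixes a b :: "'a::finite" and k K :: nat
  assumes letters_neq: "a \<noteq> b" and dim_pos: "0 < k"
begin

definition state :: "nat \<Rightarrow> nat \<Rightarrow> nat" where
  "state i j = Suc (prod_encode (i, j))"

lemma state_eq_iff [simp]: "state i j = state i' j' \<longleftrightarrow> i = i' \<and> j = j'"
  by (simp add: state_def)

lemma state_neq_0 [simp]: "state i j \<noteq> 0" "0 \<noteq> state i j"
  by (simp_all add: state_def)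

definition a_effect :: "nat \<Rightarrow> nat \<Rightarrow> int" where
  "a_effect i j = (if Suc j = i then 1 else if j = K then -1 else 0)"

definition branch_step :: "nat \<Rightarrow> nat \<Rightarrow> 'a \<Rightarrow> (int list \<times> nat) option" where
  "branch_step i j x =
     (if x = a \<and> j \<le> K then Some (first_vec k (a_effect i j), j)
      else if x = b \<and> j < K + i then Some (zero_vec k, Suc j)
      else None)"

lemma branch_step_SomeD:
  assumes "branch_step i j x = Some (d, j')" "i \<le> K"
  shows "d ! 0 = (if x = a then a_effect i j else 0)" "j' = (if x = b then Suc j else j)"
    "\<forall>l. 0 < l \<longrightarrow> l < k \<longrightarrow> d ! l = 0" "length d = k" "j \<le> 2 * K" "j' \<le> 2 * K"
  using assms letters_neq dim_pos by (auto simp: branch_step_def split: if_splits)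

definition blocks_trans :: "'a trans set" where
  "blocks_trans =
     {(state i j, x, d, state i j') | i j x d j'. 1 \<le> i \<and> i \<le> K \<and> branch_step i j x = Some (d, j')}
     \<union> {(0, x, d, state i j') | i x d j'. 1 \<le> i \<and> i \<le> K \<and> branch_step i 0 x = Some (d, j')}"

definition blocks_states :: "nat set" where
  "blocks_states = insert 0 ((\<lambda>(i, j). state i j) ` ({..K} \<times> {..2 * K}))"

definition blocks_vass :: "'a vass" where
  "blocks_vass = \<lparr>states = blocks_states, init = 0,
     final = {state i (K + i) | i. 1 \<le> i \<and> i \<le> K}, delta = blocks_trans\<rparr>"

lemma blocks_vass_simps [simp]:
  "states blocks_vass = blocks_states" "init blocks_vass = 0"
  "final blocks_vass = {state i (K + i) | i. 1 \<le> i \<and> i \<le> K}" "delta blocks_vass = blocks_trans"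
  by (simp_all add: blocks_vass_def)

lemma blocks_transE:
  assumes "t \<in> blocks_trans"
  obtains (from_state) i j x d j' where "t = (state i j, x, d, state i j')" "1 \<le> i" "i \<le> K"
    "branch_step i j x = Some (d, j')"
  | (from_init) i x d j' where "t = (0, x, d, state i j')" "1 \<le> i" "i \<le> K"
    "branch_step i 0 x = Some (d, j')"
  using assms unfolding blocks_trans_def by blast

lemma is_vass_blocks: "is_vass k blocks_vass"
proof -
  have fin: "finite blocks_states"
    by (simp add: blocks_states_def)
  have trans: "src t \<in> blocks_states \<and> tgt t \<in> blocks_states \<and> length (upd t) = k"
    if "t \<in> blocks_trans" for t
    using that
  proof (cases rule: blocks_transE)
    case (from_state i j x d j')
    then show ?thesis
      using branch_step_SomeD[OF from_state(4,3)]
      by (force simp: blocks_states_def src_def tgt_def upd_def)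
  next
    case (from_init i x d j')
    then show ?thesis
      using branch_step_SomeD[OF from_init(4,3)]
      by (force simp: blocks_states_def src_def tgt_def upd_def)
  qed
  have "blocks_trans \<subseteq> blocks_states \<times> UNIV \<times> (first_vec k ` {-1, 0, 1} \<union> {zero_vec k}) \<times> blocks_states"
  proof
    fix t
    assume t: "t \<in> blocks_trans"
    then have "upd t \<in> first_vec k ` {-1, 0, 1} \<union> {zero_vec k}"
      by (cases rule: blocks_transE)
        (auto simp: branch_step_def a_effect_def upd_def split: if_splits)
    with trans[OF t] show "t \<in> blocks_states \<times> UNIV \<times> (first_vec k ` {-1, 0, 1} \<union> {zero_vec k}) \<times> blocks_states"
      by (cases t) (simp add: src_def tgt_def upd_def)
  qed
  then have "finite blocks_trans"
    by (rule finite_subset) (simp add: fin)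
  moreover have "final blocks_vass \<subseteq> states blocks_vass"
    by (force simp: blocks_states_def)
  ultimately show ?thesis
    using fin trans by (simp add: is_vass_def blocks_states_def)
qed

text \<open>The first counter of branch \<open>i\<close> after reading \<open>w\<close>, when \<open>j\<close> letters b were read before.\<close>

fun branch_value :: "nat \<Rightarrow> nat \<Rightarrow> 'a list \<Rightarrow> int" where
  "branch_value i j [] = 0"
| "branch_value i j (x # w) =
     (if x = a then a_effect i j else 0) + branch_value i (if x = b then Suc j else j) w"

lemma branch_value_append:
  "branch_value i j (u @ v) = branch_value i j u + branch_value i (j + count_list u b) v"
  by (induction u arbitrary: j) (auto simp: letters_neq)

lemma branch_value_snoc:
  "branch_value i j (w @ [x]) = branch_value i j w + (if x = a then a_effect i (j + count_list w b) else 0)"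
  by (simp add: branch_value_append)

lemma branch_value_as: "branch_value i j (replicate n a) = int n * a_effect i j"
  by (induction n) (auto simp: letters_neq algebra_simps)

lemma branch_value_bs: "branch_value i j (replicate n b) = 0"
  using letters_neq by (induction n arbitrary: j) auto

definition blocks_word :: "nat list \<Rightarrow> 'a list" where
  "blocks_word xs = concat (map (\<lambda>n. replicate n a @ [b]) xs)"

lemma blocks_word_simps [simp]:
  "blocks_word [] = []" "blocks_word (n # xs) = replicate n a @ [b] @ blocks_word xs"
  by (simp_all add: blocks_word_def)

lemma count_b_blocks_word [simp]: "count_list (blocks_word xs) b = length xs"
  by (induction xs) (auto simp: count_list_replicate letters_neq)

lemma branch_value_blocks_word:
  assumes "j + length xs \<le> K" "1 \<le> i"
  shows "branch_value i j (blocks_word xs) = (if j < i \<and> i \<le> j + length xs then int (xs ! (i - Suc j)) else 0)"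
  using assms
proof (induction xs arbitrary: j)
  case (Cons n xs)
  have "branch_value i j (blocks_word (n # xs)) = int n * a_effect i j + branch_value i (Suc j) (blocks_word xs)"
    by (simp add: branch_value_append branch_value_as branch_value_bs count_list_replicate letters_neq letters_neq[symmetric])
  also have "a_effect i j = (if Suc j = i then 1 else 0)"
    using Cons.prems by (simp add: a_effect_def)
  finally show ?case
    using Cons.IH[of "Suc j"] Cons.prems by (auto simp: nth_Cons' Suc_diff_Suc)
qed simp

lemma branch_value_query:
  assumes "length xs = K" "\<iota> < K"
  shows "branch_value (Suc \<iota>) 0 (blocks_word xs @ replicate z a @ replicate n b) = int (xs ! \<iota>) - int z"
  using assms branch_value_blocks_word[of 0 xs "Suc \<iota>"]
  by (simp add: branch_value_append branch_value_as branch_value_bs a_effect_def)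

lemma run_branch:
  "is_run k blocks_vass w ts \<Longrightarrow> w \<noteq> [] \<Longrightarrow>
     \<exists>i. 1 \<le> i \<and> i \<le> K \<and> end_state blocks_vass ts = state i (count_list w b)
       \<and> counter ts 0 = branch_value i 0 w"
proof (induction w arbitrary: ts rule: rev_induct)
  case (snoc x w)
  from is_run_snocE[OF snoc.prems(1)] obtain ts' t where t: "ts = ts' @ [t]"
    "is_run k blocks_vass w ts'" "t \<in> delta blocks_vass" "lbl t = x" "src t = end_state blocks_vass ts'"
    by blast
  show ?case
  proof (cases "w = []")
    case True
    then have "ts' = []"
      using t(2) is_run_length by fastforce
    from t(3) have "t \<in> blocks_trans" by simp
    then show ?thesis
    proof (cases rule: blocks_transE)
      case (from_init i x' d j')
      then have "x' = x"
        using t(4) by (simp add: lbl_def)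
      then show ?thesis
        using branch_step_SomeD(1,2)[OF from_init(4,3)] from_init(1-3) t(1) \<open>w = []\<close> \<open>ts' = []\<close>
        by (intro exI[of _ i]) (simp add: tgt_def upd_def end_state_def counter_def letters_neq)
    qed (use t(5) \<open>ts' = []\<close> in \<open>simp add: src_def\<close>)
  next
    case False
    then obtain i where i: "1 \<le> i" "i \<le> K" "end_state blocks_vass ts' = state i (count_list w b)"
      "counter ts' 0 = branch_value i 0 w"
      using snoc.IH[OF t(2)] by blast
    from t(3) have "t \<in> blocks_trans" by simp
    then show ?thesis
    proof (cases rule: blocks_transE)
      case (from_state i' j x' d j')
      then have "i' = i" "j = count_list w b" "x' = x"
        using t(4,5) i(3) by (simp_all add: src_def lbl_def)
      then show ?thesis
        using branch_step_SomeD(1,2)[OF from_state(4,3)] from_state(1) t(1) i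
        by (intro exI[of _ i]) (simp add: tgt_def upd_def branch_value_snoc)
    qed (use t(5) i(3) in \<open>simp add: src_def\<close>)
  qed
qed simp

definition branch_run :: "nat \<Rightarrow> 'a list \<Rightarrow> 'a trans list \<Rightarrow> bool" where
  "branch_run i w ts \<longleftrightarrow> is_run k blocks_vass w ts
     \<and> end_state blocks_vass ts = (if w = [] then 0 else state i (count_list w b))
     \<and> (\<forall>l<k. counter ts l = (if l = 0 then branch_value i 0 w else 0))"

lemma branch_run_Nil: "branch_run i [] []"
  by (simp add: branch_run_def is_run_def)

lemma branch_run_snoc:
  assumes run: "branch_run i w ts" and i: "1 \<le> i" "i \<le> K"
    and step: "branch_step i (count_list w b) x = Some (d, j')"
    and nonneg: "0 \<le> branch_value i 0 (w @ [x])"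
  shows "\<exists>ts'. branch_run i (w @ [x]) ts'"
proof -
  define t where "t = (end_state blocks_vass ts, x, d, state i j')"
  note d = branch_step_SomeD[OF step i(2)]
  have "t \<in> blocks_trans"
    using run step i unfolding t_def blocks_trans_def branch_run_def by (cases "w = []") auto
  moreover have "0 \<le> counter ts l + upd t ! l" if "l < k" for l
    using run nonneg d that by (cases "l = 0") (auto simp: branch_run_def t_def upd_def branch_value_snoc)
  ultimately have "branch_run i (w @ [x]) (ts @ [t])"
    using run d by (auto simp: branch_run_def is_run_snoc t_def src_def lbl_def tgt_def upd_def
        branch_value_snoc)
  then show ?thesis ..
qed

lemma branch_run_value_nonneg: "branch_run i w ts \<Longrightarrow> 0 \<le> branch_value i 0 w"
  using counter_nonneg[OF _ dim_pos] dim_pos by (fastforce simp: branch_run_def)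

lemma branch_run_as:
  assumes "branch_run i w ts" "1 \<le> i" "i \<le> K" "count_list w b < K"
  shows "\<exists>ts'. branch_run i (w @ replicate n a) ts'"
proof (induction n)
  case (Suc n)
  then obtain ts' where run: "branch_run i (w @ replicate n a) ts'" ..
  have "branch_step i (count_list (w @ replicate n a) b) a
      = Some (first_vec k (a_effect i (count_list w b)), count_list w b)"
    using assms(4) by (simp add: branch_step_def count_list_replicate letters_neq)
  moreover have "0 \<le> branch_value i 0 ((w @ replicate n a) @ [a])"
    using branch_run_value_nonneg[OF run] assms(4) letters_neq
    by (simp add: branch_value_append branch_value_as count_list_replicate a_effect_def
        split: if_splits)
  ultimately show ?case
    using branch_run_snoc[OF run assms(2,3)] by (simp add: replicate_append_same[symmetric])
qed (use assms(1) in auto)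

lemma branch_run_bs:
  assumes "branch_run i w ts" "1 \<le> i" "i \<le> K" "count_list w b + n \<le> K + i"
  shows "\<exists>ts'. branch_run i (w @ replicate n b) ts'"
  using assms(4)
proof (induction n)
  case (Suc n)
  then obtain ts' where run: "branch_run i (w @ replicate n b) ts'" by auto
  have "branch_step i (count_list (w @ replicate n b) b) b
      = Some (zero_vec k, Suc (count_list w b + n))"
    using Suc.prems letters_neq by (simp add: branch_step_def count_list_replicate)
  moreover have "0 \<le> branch_value i 0 ((w @ replicate n b) @ [b])"
    using branch_run_value_nonneg[OF run] letters_neq
    by (simp add: branch_value_append branch_value_bs)
  ultimately show ?case
    using branch_run_snoc[OF run assms(2,3)] by (simp add: replicate_append_same[symmetric])
qed (use assms(1) in auto)

lemma branch_run_blocks_word: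
  assumes "1 \<le> i" "i \<le> K"
  shows "branch_run i w ts \<Longrightarrow> count_list w b + length xs \<le> K \<Longrightarrow>
    \<exists>ts'. branch_run i (w @ blocks_word xs) ts'"
proof (induction xs arbitrary: w ts)
  case (Cons n xs)
  obtain ts1 where "branch_run i (w @ replicate n a) ts1"
    using branch_run_as[OF Cons.prems(1) assms] Cons.prems(2) by fastforce
  moreover have "count_list (w @ replicate n a) b + 1 \<le> K + i"
    using Cons.prems(2) assms letters_neq by (simp add: count_list_replicate)
  ultimately obtain ts2 where "branch_run i ((w @ replicate n a) @ replicate 1 b) ts2"
    using branch_run_bs[OF _ assms] by blast
  moreover have "count_list ((w @ replicate n a) @ replicate 1 b) b + length xs \<le> K"
    using Cons.prems(2) letters_neq by (simp add: count_list_replicate)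
  ultimately show ?case
    using Cons.IH by fastforce
qed auto

lemma branch_run_query:
  assumes "branch_run i w ts" "1 \<le> i" "i \<le> K" "count_list w b = K"
  shows "int z \<le> branch_value i 0 w \<Longrightarrow> \<exists>ts'. branch_run i (w @ replicate z a) ts'"
proof (induction z)
  case (Suc z)
  then obtain ts' where run: "branch_run i (w @ replicate z a) ts'" by auto
  have "branch_step i (count_list (w @ replicate z a) b) a = Some (first_vec k (-1), K)"
    using assms(3,4) letters_neq by (simp add: branch_step_def count_list_replicate a_effect_def)
  moreover have "0 \<le> branch_value i 0 ((w @ replicate z a) @ [a])"
    using Suc.prems assms(3,4) letters_neq
    by (simp add: branch_value_snoc branch_value_append branch_value_as count_list_replicate a_effect_def)
  ultimately show ?case
    using branch_run_snoc[OF run assms(2,3)] by (simp add: replicate_append_same[symmetric])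
qed (use assms(1) in auto)

lemma query_in_lang:
  assumes "length xs = K" "\<iota> < K"
  shows "blocks_word xs @ replicate (xs ! \<iota>) a @ replicate (Suc \<iota>) b \<in> lang m k blocks_vass"
proof -
  have i: "1 \<le> Suc \<iota>" "Suc \<iota> \<le> K"
    using assms(2) by auto
  obtain ts1 where "branch_run (Suc \<iota>) ([] @ blocks_word xs) ts1"
    using branch_run_blocks_word[OF i branch_run_Nil] assms(1) by fastforce
  moreover have "int (xs ! \<iota>) \<le> branch_value (Suc \<iota>) 0 (blocks_word xs)"
    using branch_value_query[OF assms, of 0 0] by simp
  ultimately obtain ts2 where "branch_run (Suc \<iota>) (blocks_word xs @ replicate (xs ! \<iota>) a) ts2"
    using branch_run_query[OF _ i] assms(1) by fastforce
  then obtain ts where run: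
      "branch_run (Suc \<iota>) ((blocks_word xs @ replicate (xs ! \<iota>) a) @ replicate (Suc \<iota>) b) ts"
    using branch_run_bs[OF _ i] assms(1) letters_neq by (fastforce simp: count_list_replicate)
  have "accepting_run m k blocks_vass (blocks_word xs @ replicate (xs ! \<iota>) a @ replicate (Suc \<iota>) b) ts"
    using run branch_value_query[OF assms, of "xs ! \<iota>" "Suc \<iota>"] assms(1) i letters_neq
    by (auto simp: branch_run_def accepting_run_def count_list_replicate)
  then show ?thesis
    by (auto simp: lang_def)
qed

lemma query_in_lang_imp_le:
  assumes "length xs = K" "\<iota> < K"
    and "blocks_word xs @ replicate z a @ replicate (Suc \<iota>) b \<in> lang Cov k blocks_vass"
  shows "z \<le> xs ! \<iota>"
proof -
  define w where "w = blocks_word xs @ replicate z a @ replicate (Suc \<iota>) b"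
  obtain ts where acc: "accepting_run Cov k blocks_vass w ts"
    using assms(3) by (auto simp: lang_def w_def)
  then have run: "is_run k blocks_vass w ts"
    by (simp add: accepting_run_def)
  obtain i where i: "end_state blocks_vass ts = state i (count_list w b)"
    "counter ts 0 = branch_value i 0 w"
    using run_branch[OF run] by (auto simp: w_def)
  obtain i' where "end_state blocks_vass ts = state i' (K + i')"
    using acc by (auto simp: accepting_run_def)
  with i(1) have "i = Suc \<iota>"
    using assms(1) letters_neq by (simp add: w_def count_list_replicate)
  then show ?thesis
    using counter_nonneg[OF run dim_pos] i(2) branch_value_query[OF assms(1,2), of z "Suc \<iota>"]
    by (simp add: w_def)
qed

lemma resolver_config_inj:
  assumes r: "is_resolver m k B r" and L: "lang m k B = lang m k blocks_vass"
  shows "inj_on (\<lambda>xs. config k B (resolve r (blocks_word xs))) {xs. length xs = K}"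
proof (rule inj_onI)
  fix xs ys
  assume xs: "xs \<in> {xs. length xs = K}" and ys: "ys \<in> {xs. length xs = K}"
    and conf: "config k B (resolve r (blocks_word xs)) = config k B (resolve r (blocks_word ys))"
  have le: "xs ! \<iota> \<le> ys ! \<iota>"
    if "length xs = K" "length ys = K" "\<iota> < K"
      and conf: "config k B (resolve r (blocks_word ys)) = config k B (resolve r (blocks_word xs))"
    for xs ys \<iota>
  proof -
    define v where "v = replicate (xs ! \<iota>) a @ replicate (Suc \<iota>) b"
    have "blocks_word xs @ v \<in> lang m k B"
      using query_in_lang[OF that(1,3)] L by (simp add: v_def)
    moreover have "is_run k B (blocks_word ys) (resolve r (blocks_word ys))"
      using resolver_run_prefix[OF r] query_in_lang[OF that(2,3)] L by blast
    ultimately have "blocks_word ys @ v \<in> lang m k blocks_vass"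
      using resolver_config_residual[OF r _ _ conf] L by simp
    then have "blocks_word ys @ v \<in> lang Cov k blocks_vass"
      using lang_Reach_subset_Cov by (cases m) auto
    then show ?thesis
      unfolding v_def by (rule query_in_lang_imp_le[OF that(2,3)])
  qed
  show "xs = ys"
  proof (rule nth_equalityI)
    show "length xs = length ys"
      using xs ys by simp
    show "xs ! i = ys ! i" if "i < length xs" for i
    proof (rule le_antisym)
      show "xs ! i \<le> ys ! i"
        by (rule le) (use xs ys that conf in auto)
      show "ys ! i \<le> xs ! i"
        by (rule le) (use xs ys that conf in auto)
    qed
  qed
qed

lemma length_blocks_word_le:
  assumes "\<forall>n\<in>set xs. n \<le> N"
  shows "length (blocks_word xs) \<le> length xs * Suc N"
  using assms by (induction xs) auto

lemma resolver_config_bounded: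
  assumes B: "is_vass k B" "is_resolver m k B r" "lang m k B = lang m k blocks_vass"
    and xs: "length xs = K" "set xs \<subseteq> {0..N}" and "0 < K"
  shows "config k B (resolve r (blocks_word xs)) \<in> bounded_configs k B (update_bound k B * (K * Suc N))"
proof -
  have "\<forall>n\<in>set xs. n \<le> N"
    using xs(2) by auto
  then have len: "length (blocks_word xs) \<le> K * Suc N"
    using length_blocks_word_le xs(1) by blast
  have "blocks_word xs @ (replicate (xs ! 0) a @ replicate 1 b) \<in> lang m k B"
    using query_in_lang[of xs 0] xs(1) B(3) \<open>0 < K\<close> by simp
  then have "is_run k B (blocks_word xs) (resolve r (blocks_word xs))"
    by (rule resolver_run_prefix[OF B(2)])
  then show ?thesis
    using len by (rule config_in_bounded_configs[OF B(1)])
qed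

lemma lang_notin_HDClass:
  assumes "K = Suc k"
  shows "lang m k blocks_vass \<notin> HDClass m k"
proof
  assume "lang m k blocks_vass \<in> HDClass m k"
  then obtain B :: "'a vass" and r where B: "is_vass k B" "is_resolver m k B r"
      "lang m k B = lang m k blocks_vass"
    by (auto simp: HDClass_def history_deterministic_def)
  \<comment> \<open>N is large enough for the \<open>(N + 1) ^ K\<close> vectors in X to outnumber the configurations
    reachable by runs of length at most \<open>K * (N + 1)\<close>.\<close>
  define C where "C = update_bound k B * K + 1"
  define N where "N = card (states B) * C ^ k"
  define X where "X = {xs. set xs \<subseteq> {0..N} \<and> length xs = K}"
  define f where "f xs = config k B (resolve r (blocks_word xs))" for xs
  have fin: "finite (states B)"
    using B(1) by (simp add: is_vass_def)
  have "f ` X \<subseteq> bounded_configs k B (update_bound k B * (K * Suc N))"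
    using resolver_config_bounded[OF B] assms by (auto simp: f_def X_def)
  moreover have "inj_on f X"
    using resolver_config_inj[OF B(2,3)] unfolding f_def X_def by (rule inj_on_subset) auto
  ultimately have "card X \<le> card (states B) * Suc (update_bound k B * (K * Suc N)) ^ k"
    using card_inj_on_le[of f X] finite_bounded_configs[OF fin] card_bounded_configs[OF fin] by metis
  also have "\<dots> \<le> card (states B) * (C * (N + 1)) ^ k"
    unfolding C_def by (intro mult_le_mono2 power_mono) (auto simp: algebra_simps)
  also have "\<dots> < (N + 1) ^ Suc k"
    by (rule mult_pow_less_Suc_pow) (simp add: N_def)
  also have "\<dots> = card X"
    unfolding X_def assms by (simp add: card_lists_length_eq)
  finally show False
    by simp
qed

end

lemma ex_neq_if_two_le_card:
  assumes "2 \<le> card A"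
  shows "\<exists>a\<in>A. \<exists>b\<in>A. a \<noteq> b"
proof -
  from assms obtain a B where "A = insert a B" "a \<notin> B" "1 \<le> card B"
    using card_le_Suc_iff[of 1 A] by auto
  moreover from \<open>1 \<le> card B\<close> obtain b where "b \<in> B"
    by (metis card.empty equals0I not_one_le_zero)
  ultimately show ?thesis
    by auto
qed

theorem mainTheorem1:
  fixes k :: nat
  assumes "k \<ge> 1" and "card (UNIV :: ('a::finite) set) \<ge> 2"
  shows "(DetClass Cov k :: ('a::finite) list set set) \<subset> HDClass Cov k
       \<and> (HDClass Cov k :: 'a list set set) \<subset> NDClass Cov k
       \<and> (DetClass Reach k :: 'a list set set) \<subset> HDClass Reach k
       \<and> (HDClass Reach k :: 'a list set set) \<subset> NDClass Reach k"
proof -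
  obtain a b :: 'a where ab: "a \<noteq> b"
    using ex_neq_if_two_le_card assms(2) by blast
  have k: "0 < k"
    using assms(1) by simp
  interpret blocks a b k "Suc k"
    using ab k by unfold_locales
  have "(DetClass m k :: 'a list set set) \<subset> HDClass m k" for m
    unfolding psubset_eq
    using DetClass_subset_HDClass countdown_lang_in_HDClass[OF ab k, of m]
      countdown_lang_notin_DetClass[OF ab k, of m] by blast
  moreover have "(HDClass m k :: 'a list set set) \<subset> NDClass m k" for m
  proof -
    have "lang m k blocks_vass \<in> NDClass m k"
      using is_vass_blocks unfolding NDClass_def by blast
    then show ?thesis
      unfolding psubset_eq using HDClass_subset_NDClass lang_notin_HDClass[OF refl, of m] by blast
  qed
  ultimately show ?thesis
    by blast
qed

end
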